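(* Let $\mathcal S$ and $\mathcal A$ be finite sets, $P(\cdot\mid s,a)$ a transition kernel on $\mathcal S$, $r:\mathcal S\times\mathcal A\times\mathcal S\to\mathbb R$ a reward function, $\gamma\in[0,1)$, and $\beta>0$. Let $Q^*$ be the unique fixed point of the Bellman operator $(TQ)(s,a)=R(s,a)+\gamma\sum_{s'}P(s'\mid s,a)\max_{a'\in\mathcal A}Q(s',a')$, where $R(s,a)=\sum_{s'}P(s'\mid s,a)r(s,a,s')$. For $Q_1,Q_2:\mathcal S\times\mathcal A\to\mathbb R$ define $$L_1=\mathbb E_{(s,a)\sim U(\mathcal S\times\mathcal A),\,s'\sim P(\cdot\mid s,a)}\Big[\big(r(s,a,s')+\gamma\max_{a'}Q_2(s',a')-Q_1(s,a)\big)^2+\tfrac{\beta}{2}\big(Q_2(s,a)-Q_1(s,a)\big)^2\Big],$$ $$L_2=\mathbb E_{(s,a)\sim U(\mathcal S\times\mathcal A),\,s'\sim P(\cdot\mid s,a)}\Big[\big(r(s,a,s')+\gamma\max_{a'}Q_1(s',a')-Q_2(s,a)\big)^2+\tfrac{\beta}{2}\big(Q_1(s,a)-Q_2(s,a)\big)^2\Big],$$ where $U(\mathcal S\times\mathcal A)$ is the uniform distribution. If $\varepsilon>0$ and $L_1\le\varepsilon$, $L_2\le\varepsilon$, then for $i\in\{1,2\}$ $$\|Q_i-Q^*\|_\infty\le\frac{\sqrt{\varepsilon|\mathcal S||\mathcal A|}}{1-\gamma}+\frac{\gamma}{1-\gamma}\sqrt{\frac{2\varepsilon|\mathcal S||\mathcal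 A|}{\beta}}.$$
   Context: $Q_1,Q_2$ play the roles of the online and target Q-functions of the "symmetric gradient target tracking" method (SGT2-DQN); they are arbitrary real-valued functions on $\mathcal S\times\mathcal A$. $\|\cdot\|_\infty$ is the maximum over $\mathcal S\times\mathcal A$. *)

theory Defs
  imports "HOL-Analysis.Analysis"
begin

definition transition_kernel :: "('s::finite \<Rightarrow> 'act::finite \<Rightarrow> 's \<Rightarrow> real) \<Rightarrow> bool" where
  "transition_kernel P \<longleftrightarrow> (\<forall>s a s'. P s a s' \<ge> 0) \<and> (\<forall>s a. (\<Sum>s'\<in>UNIV. P s a s') = 1)"

definition maxQ :: "('s \<Rightarrow> 'act::finite \<Rightarrow> real) \<Rightarrow> 's \<Rightarrow> real" where
  "maxQ Q s = Max (range (\<lambda>a. Q s a))"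

definition exp_reward :: "('s::finite \<Rightarrow> 'act \<Rightarrow> 's \<Rightarrow> real) \<Rightarrow> ('s \<Rightarrow> 'act \<Rightarrow> 's \<Rightarrow> real) \<Rightarrow> 's \<Rightarrow> 'act \<Rightarrow> real" where
  "exp_reward P r s a = (\<Sum>s'\<in>UNIV. P s a s' * r s a s')"

definition bellman :: "('s::finite \<Rightarrow> 'act::finite \<Rightarrow> 's \<Rightarrow> real) \<Rightarrow> ('s \<Rightarrow> 'act \<Rightarrow> 's \<Rightarrow> real) \<Rightarrow> real
    \<Rightarrow> ('s \<Rightarrow> 'act \<Rightarrow> real) \<Rightarrow> ('s \<Rightarrow> 'act \<Rightarrow> real)" where
  "bellman P r \<gamma> Q = (\<lambda>s a. exp_reward P r s a + \<gamma> * (\<Sum>s'\<in>UNIV. P s a s' * maxQ Q s'))"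

definition supnorm :: "('s::finite \<Rightarrow> 'act::finite \<Rightarrow> real) \<Rightarrow> real" where
  "supnorm Q = Max (range (\<lambda>(s,a). \<bar>Q s a\<bar>))"

definition expect_sas :: "('s::finite \<Rightarrow> 'act::finite \<Rightarrow> 's \<Rightarrow> real) \<Rightarrow> ('s \<Rightarrow> 'act \<Rightarrow> 's \<Rightarrow> real) \<Rightarrow> real" where
  "expect_sas P f = (\<Sum>s\<in>UNIV. \<Sum>a\<in>UNIV. (1 / (real CARD('s) * real CARD('act))) *
      (\<Sum>s'\<in>UNIV. P s a s' * f s a s'))"

text \<open>The SGT2 loss for the first network, Q1 online, Q2 target; L2 = sgt2_loss .. Q2 Q1.\<close>
definition sgt2_loss :: "('s::finite \<Rightarrow> 'act::finite \<Rightarrow> 's \<Rightarrow> real) \<Rightarrow> ('s \<Rightarrow> 'act \<Rightarrow> 's \<Rightarrow> real) \<Rightarrow> real \<Rightarrow> real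
    \<Rightarrow> ('s \<Rightarrow> 'act \<Rightarrow> real) \<Rightarrow> ('s \<Rightarrow> 'act \<Rightarrow> real) \<Rightarrow> real" where
  "sgt2_loss P r \<gamma> \<beta> Q1 Q2 = expect_sas P (\<lambda>s a s'.
      (r s a s' + \<gamma> * maxQ Q2 s' - Q1 s a)^2 + (\<beta> / 2) * (Q2 s a - Q1 s a)^2)"

end

theory Submission
  imports Defs
begin

text \<open>Taking the expectation over \<open>s'\<close> in each of the two losses separates them into the
  squared Bellman residual (bounded below via Jensen by the square of its mean) and the
  coupling term. Since every pair \<open>(s,a)\<close> carries weight \<open>1/(|S||A|)\<close>, each pointwise residual
  satisfies \<open>|T Q\<^sub>2 - Q\<^sub>1| \<le> e\<close> and \<open>|Q\<^sub>2 - Q\<^sub>1| \<le> d\<close> with \<open>e = sqrt(\<epsilon>|S||A|)\<close> and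
  \<open>d = sqrt(2\<epsilon>|S||A|/\<beta>)\<close>. As \<open>T\<close> is a \<open>\<gamma>\<close>-contraction with fixed point \<open>Q\<^sup>*\<close>,
  \<open>\<parallel>Q\<^sub>1 - Q\<^sup>*\<parallel> \<le> e + \<gamma>\<parallel>Q\<^sub>2 - Q\<^sub>1\<parallel> + \<gamma>\<parallel>Q\<^sub>1 - Q\<^sup>*\<parallel>\<close>, which rearranges to the bound; the
  second loss gives the same for \<open>Q\<^sub>2\<close>.\<close>

lemma maxQ_ge: "Q s a \<le> maxQ (Q :: 's \<Rightarrow> 'act::finite \<Rightarrow> real) s"
  unfolding maxQ_def by (rule Max_ge) auto

lemma maxQ_attained: "\<exists>a. maxQ (Q :: 's \<Rightarrow> 'act::finite \<Rightarrow> real) s = Q s a"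
proof -
  have "Max (range (Q s)) \<in> range (Q s)" by (rule Max_in) auto
  then show ?thesis unfolding maxQ_def by blast
qed

lemma abs_maxQ_diff_le:
  fixes Q Q' :: "'s \<Rightarrow> 'act::finite \<Rightarrow> real"
  assumes "\<And>a. \<bar>Q s a - Q' s a\<bar> \<le> d"
  shows "\<bar>maxQ Q s - maxQ Q' s\<bar> \<le> d"
proof -
  obtain a b where a: "maxQ Q s = Q s a" and b: "maxQ Q' s = Q' s b"
    using maxQ_attained by metis
  have "maxQ Q s \<le> maxQ Q' s + d"
    using a assms[of a] maxQ_ge[of Q' s a] by linarith
  moreover have "maxQ Q' s \<le> maxQ Q s + d"
    using b assms[of b] maxQ_ge[of Q s b] by linarith
  ultimately show ?thesis by linarith
qed

lemma abs_le_supnorm: "\<bar>Q s a\<bar> \<le> supnorm (Q :: 's::finite \<Rightarrow> 'act::finite \<Rightarrow> real)"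
  unfolding supnorm_def by (rule Max_ge) (auto intro: image_eqI[where x="(s,a)"])

lemma supnorm_leI:
  assumes "\<And>s a. \<bar>Q s a\<bar> \<le> c"
  shows "supnorm (Q :: 's::finite \<Rightarrow> 'act::finite \<Rightarrow> real) \<le> c"
  unfolding supnorm_def using assms by (subst Max_le_iff) auto

lemma transition_kernelD:
  assumes "transition_kernel P"
  shows "P s a s' \<ge> 0" and "(\<Sum>s'\<in>UNIV. P s a s') = 1"
  using assms unfolding transition_kernel_def by auto

lemma abs_weighted_sum_le:
  fixes p g :: "'a \<Rightarrow> real"
  assumes "\<And>x. x \<in> A \<Longrightarrow> p x \<ge> 0" and "sum p A = 1" and "\<And>x. x \<in> A \<Longrightarrow> \<bar>g x\<bar> \<le> d"
  shows "\<bar>\<Sum>x\<in>A. p x * g x\<bar> \<le> d"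
proof -
  have "\<bar>\<Sum>x\<in>A. p x * g x\<bar> \<le> (\<Sum>x\<in>A. \<bar>p x * g x\<bar>)"
    by (rule sum_abs)
  also have "\<dots> \<le> (\<Sum>x\<in>A. p x * d)"
    using assms(1,3) by (intro sum_mono) (simp add: abs_mult mult_left_mono)
  also have "\<dots> = d"
    using assms(2) by (simp add: sum_distrib_right[symmetric])
  finally show ?thesis .
qed

text \<open>Jensen's inequality for the square, from the nonnegativity of the variance.\<close>
lemma square_weighted_sum_le:
  fixes p g :: "'a \<Rightarrow> real"
  assumes "\<And>x. x \<in> A \<Longrightarrow> p x \<ge> 0" and "sum p A = 1"
  shows "(\<Sum>x\<in>A. p x * g x)\<^sup>2 \<le> (\<Sum>x\<in>A. p x * (g x)\<^sup>2)"
proof -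
  define m where "m = (\<Sum>x\<in>A. p x * g x)"
  have "0 \<le> (\<Sum>x\<in>A. p x * (g x - m)\<^sup>2)"
    using assms(1) by (intro sum_nonneg) auto
  also have "\<dots> = (\<Sum>x\<in>A. p x * (g x)\<^sup>2) - 2 * m * (\<Sum>x\<in>A. p x * g x) + m\<^sup>2 * sum p A"
    by (simp add: power2_diff algebra_simps sum.distrib sum_subtractf sum_distrib_left sum_distrib_right)
  finally show ?thesis
    using assms(2) unfolding m_def by (simp add: power2_eq_square)
qed

lemma bellman_contraction:
  fixes P :: "'s::finite \<Rightarrow> 'act::finite \<Rightarrow> 's \<Rightarrow> real"
  assumes P: "transition_kernel P" and "0 \<le> \<gamma>"
  shows "\<bar>bellman P r \<gamma> Q s a - bellman P r \<gamma> Q' s a\<bar> \<le> \<gamma> * supnorm (\<lambda>s a. Q s a - Q' s a)"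
proof -
  have "bellman P r \<gamma> Q s a - bellman P r \<gamma> Q' s a
      = \<gamma> * (\<Sum>s'\<in>UNIV. P s a s' * (maxQ Q s' - maxQ Q' s'))"
    unfolding bellman_def by (simp add: algebra_simps sum_subtractf)
  moreover have "\<bar>\<Sum>s'\<in>UNIV. P s a s' * (maxQ Q s' - maxQ Q' s')\<bar> \<le> supnorm (\<lambda>s a. Q s a - Q' s a)"
    using transition_kernelD[OF P]
    by (intro abs_weighted_sum_le abs_maxQ_diff_le)
       (auto intro: abs_le_supnorm[where Q="\<lambda>s a. Q s a - Q' s a", simplified])
  ultimately show ?thesis
    using \<open>0 \<le> \<gamma>\<close> by (simp add: abs_mult mult_left_mono)
qed

lemma kernel_mean_le_expect_sas:
  fixes P :: "'s::finite \<Rightarrow> 'act::finite \<Rightarrow> 's \<Rightarrow> real"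
  assumes P: "transition_kernel P" and f: "\<And>s a s'. f s a s' \<ge> 0"
  shows "(\<Sum>s'\<in>UNIV. P s a s' * f s a s') \<le> real CARD('s) * real CARD('act) * expect_sas P f"
proof -
  define F where "F s a = (\<Sum>s'\<in>UNIV. P s a s' * f s a s')" for s a
  have F_nonneg: "F s a \<ge> 0" for s a
    unfolding F_def using transition_kernelD(1)[OF P] f by (intro sum_nonneg) auto
  have "F s a \<le> (\<Sum>a'\<in>UNIV. F s a')"
    by (rule member_le_sum) (auto simp: F_nonneg)
  also have "\<dots> \<le> (\<Sum>s'\<in>UNIV. \<Sum>a'\<in>UNIV. F s' a')"
    by (rule member_le_sum[where f="\<lambda>s'. \<Sum>a'\<in>UNIV. F s' a'"]) (auto intro: sum_nonneg F_nonneg)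
  also have "\<dots> = real CARD('s) * real CARD('act) * expect_sas P f"
    unfolding expect_sas_def F_def by (simp add: sum_divide_distrib[symmetric])
  finally show ?thesis unfolding F_def .
qed

lemma square_bellman_residual_le:
  fixes P :: "'s::finite \<Rightarrow> 'act::finite \<Rightarrow> 's \<Rightarrow> real"
  assumes P: "transition_kernel P"
  shows "(bellman P r \<gamma> Qb s a - Qa s a)\<^sup>2
      \<le> (\<Sum>s'\<in>UNIV. P s a s' * (r s a s' + \<gamma> * maxQ Qb s' - Qa s a)\<^sup>2)"
proof -
  have "(\<Sum>s'\<in>UNIV. P s a s' * (r s a s' + \<gamma> * maxQ Qb s' - Qa s a))
      = exp_reward P r s a + \<gamma> * (\<Sum>s'\<in>UNIV. P s a s' * maxQ Qb s') - Qa s a * (\<Sum>s'\<in>UNIV. P s a s')"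
    unfolding exp_reward_def
    by (simp add: algebra_simps sum.distrib sum_subtractf sum_distrib_left sum_distrib_right)
  then have "bellman P r \<gamma> Qb s a - Qa s a = (\<Sum>s'\<in>UNIV. P s a s' * (r s a s' + \<gamma> * maxQ Qb s' - Qa s a))"
    using transition_kernelD(2)[OF P, of s a] by (simp add: bellman_def)
  then show ?thesis
    using transition_kernelD[OF P] by (simp add: square_weighted_sum_le)
qed

lemma sgt2_loss_pointwise_bounds:
  fixes P :: "'s::finite \<Rightarrow> 'act::finite \<Rightarrow> 's \<Rightarrow> real"
  assumes P: "transition_kernel P" and "\<beta> > 0"
    and L: "sgt2_loss P r \<gamma> \<beta> Qa Qb \<le> \<epsilon>"
  shows "\<bar>bellman P r \<gamma> Qb s a - Qa s a\<bar> \<le> sqrt (\<epsilon> * real CARD('s) * real CARD('act))"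
    and "\<bar>Qb s a - Qa s a\<bar> \<le> sqrt (2 * \<epsilon> * real CARD('s) * real CARD('act) / \<beta>)"
proof -
  define N where "N = real CARD('s) * real CARD('act)"
  define residual where "residual = (\<Sum>s'\<in>UNIV. P s a s' * (r s a s' + \<gamma> * maxQ Qb s' - Qa s a)\<^sup>2)"
  define coupling where "coupling = (\<beta> / 2) * (Qb s a - Qa s a)\<^sup>2"
  have "(\<Sum>s'\<in>UNIV. P s a s' * ((r s a s' + \<gamma> * maxQ Qb s' - Qa s a)\<^sup>2 + coupling))
      = residual + coupling * (\<Sum>s'\<in>UNIV. P s a s')"
    unfolding residual_def by (simp add: algebra_simps sum.distrib sum_distrib_left)
  then have "residual + coupling
      = (\<Sum>s'\<in>UNIV. P s a s' * ((r s a s' + \<gamma> * maxQ Qb s' - Qa s a)\<^sup>2 + (\<beta> / 2) * (Qb s a - Qa s a)\<^sup>2))"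
    using transition_kernelD(2)[OF P, of s a] unfolding coupling_def by simp
  also have "\<dots> \<le> N * sgt2_loss P r \<gamma> \<beta> Qa Qb"
    unfolding sgt2_loss_def N_def using \<open>\<beta> > 0\<close> by (intro kernel_mean_le_expect_sas[OF P]) simp
  also have "\<dots> \<le> \<epsilon> * N"
    using L by (simp add: N_def mult.commute)
  finally have sum_le: "residual + coupling \<le> \<epsilon> * N" .
  have "residual \<ge> 0"
    unfolding residual_def using transition_kernelD(1)[OF P] by (intro sum_nonneg) auto
  moreover have "coupling \<ge> 0"
    unfolding coupling_def using \<open>\<beta> > 0\<close> by simp
  moreover have "(bellman P r \<gamma> Qb s a - Qa s a)\<^sup>2 \<le> residual"
    unfolding residual_def by (rule square_bellman_residual_le[OF P])
  ultimately have residual_le: "\<bar>bellman P r \<gamma> Qb s a - Qa s a\<bar>\<^sup>2 \<le> \<epsilon> * N"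
    and coupling_le: "coupling \<le> \<epsilon> * N"
    using sum_le by simp_all
  from coupling_le have "\<bar>Qb s a - Qa s a\<bar>\<^sup>2 \<le> 2 * \<epsilon> * N / \<beta>"
    using \<open>\<beta> > 0\<close> unfolding coupling_def by (simp add: field_simps)
  with residual_le
  show "\<bar>bellman P r \<gamma> Qb s a - Qa s a\<bar> \<le> sqrt (\<epsilon> * real CARD('s) * real CARD('act))"
    and "\<bar>Qb s a - Qa s a\<bar> \<le> sqrt (2 * \<epsilon> * real CARD('s) * real CARD('act) / \<beta>)"
    unfolding N_def by (simp_all add: real_le_rsqrt mult.assoc)
qed

lemma supnorm_diff_fixpoint_le:
  fixes P :: "'s::finite \<Rightarrow> 'act::finite \<Rightarrow> 's \<Rightarrow> real"
  assumes P: "transition_kernel P" and "0 \<le> \<gamma>" and "\<gamma> < 1"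
    and fixpoint: "bellman P r \<gamma> Qstar = Qstar"
    and residual: "\<And>s a. \<bar>bellman P r \<gamma> Qb s a - Qa s a\<bar> \<le> e"
    and coupling: "\<And>s a. \<bar>Qb s a - Qa s a\<bar> \<le> d"
  shows "supnorm (\<lambda>s a. Qa s a - Qstar s a) \<le> e / (1 - \<gamma>) + \<gamma> / (1 - \<gamma>) * d"
proof -
  define M where "M = supnorm (\<lambda>s a. Qa s a - Qstar s a)"
  have "\<gamma> * supnorm (\<lambda>s a. Qb s a - Qa s a) \<le> \<gamma> * d"
    using \<open>0 \<le> \<gamma>\<close> coupling by (intro mult_left_mono supnorm_leI) auto
  then have "\<bar>Qa s a - Qstar s a\<bar> \<le> e + \<gamma> * d + \<gamma> * M" for s a
    using residual[of s a] fun_cong[OF fun_cong[OF fixpoint, of s], of a]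
      bellman_contraction[OF P \<open>0 \<le> \<gamma>\<close>, of r Qb s a Qa]
      bellman_contraction[OF P \<open>0 \<le> \<gamma>\<close>, of r Qa s a Qstar]
    unfolding M_def by linarith
  then have "M \<le> e + \<gamma> * d + \<gamma> * M"
    unfolding M_def by (intro supnorm_leI) simp
  then have "M \<le> (e + \<gamma> * d) / (1 - \<gamma>)"
    using \<open>\<gamma> < 1\<close> by (simp add: field_simps)
  then show ?thesis
    unfolding M_def by (simp add: add_divide_distrib)
qed

theorem theorem2:
  fixes P :: "'s::finite \<Rightarrow> 'act::finite \<Rightarrow> 's \<Rightarrow> real"
    and r :: "'s \<Rightarrow> 'act \<Rightarrow> 's \<Rightarrow> real"
    and \<gamma> \<beta> \<epsilon> :: real
    and Qstar Q1 Q2 :: "'s \<Rightarrow> 'act \<Rightarrow> real"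
  assumes "transition_kernel P"
    and "0 \<le> \<gamma>" and "\<gamma> < 1" and "\<beta> > 0"
    and "bellman P r \<gamma> Qstar = Qstar"
    and "\<epsilon> > 0"
    and "sgt2_loss P r \<gamma> \<beta> Q1 Q2 \<le> \<epsilon>"
    and "sgt2_loss P r \<gamma> \<beta> Q2 Q1 \<le> \<epsilon>"
  shows "\<forall>Q \<in> {Q1, Q2}. supnorm (\<lambda>s a. Q s a - Qstar s a) \<le>
      sqrt (\<epsilon> * real CARD('s) * real CARD('act)) / (1 - \<gamma>)
      + \<gamma> / (1 - \<gamma>) * sqrt (2 * \<epsilon> * real CARD('s) * real CARD('act) / \<beta>)"
proof -
  have "supnorm (\<lambda>s a. Qa s a - Qstar s a) \<le>
      sqrt (\<epsilon> * real CARD('s) * real CARD('act)) / (1 - \<gamma>)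
      + \<gamma> / (1 - \<gamma>) * sqrt (2 * \<epsilon> * real CARD('s) * real CARD('act) / \<beta>)"
    if "sgt2_loss P r \<gamma> \<beta> Qa Qb \<le> \<epsilon>" for Qa Qb
    using supnorm_diff_fixpoint_le[OF assms(1-3,5) sgt2_loss_pointwise_bounds[OF assms(1,4) that]] .
  then show ?thesis
    using assms(7,8) by blast
qed

end
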